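(* Let $\mathbb{K}$ be either $\mathbb{R}$ or $\mathbb{C}$, with all coefficients and solutions in $\mathbb{K}$. Let $D$ be a positive integer and $1\le D<q\le\infty$. For $k\in\{1,\dots,D\}$ let $\mathcal{D}_k=\{(d_1,\dots,d_k)\in\mathbb{N}^k: d_1+\cdots+d_k\le D\}$. Let $I$ be an infinite set. For all $i\in I$ and $d\in\{1,\dots,D\}$ let $\mathbf{a}_{i,d}=(a_{i,d,j})_{j=1}^\infty\in\ell^{q/(q-d)}$, $(\mathbf{a}_{i,d},\mathbf{x}^d)=\sum_{j=1}^\infty a_{i,d,j}x_j^d$, and \[ P_i(\mathbf{x})=\sum_{k=1}^D\sum_{(d_1,\dots,d_k)\in\mathcal{D}_k}(\mathbf{a}_{i,d_1},\mathbf{x}^{d_1})\cdots(\mathbf{a}_{i,d_k},\mathbf{x}^{d_k}). \] Let $\mathbf{b}=(b_i)_{i\in I}$ with $b_i\in\mathbb{K}$, and let $\mathbf{m}=(m_j)_{j=1}^\infty\in\ell^q$ with $m_j\ge 0$ for all $j\in\mathbb{N}$. If for every $\varepsilon>0$ and every finite subset $S$ of $I$ the finite set of inequalities $\{|P_i(\mathbf{x})-b_i|\le\varepsilon : i\in S\}$ has a solution $\mathbf{x}_{S,\varepsilon}=(x_{S,\varepsilon,j})_{j=1}^\infty\in\ell^q$ with $|x_{S,\varepsilon,j}|\le m_j$ for all $j\in\mathbb{N}$, then the infinite set of equations $\{P_i(\mathbf{x})=b_i : i\in I\}$ has an exact solution $\mathbf{x}=(x_j)_{j=1}^\infty\in\ell^q$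 with $|x_j|\le m_j$ for all $j\in\mathbb{N}$.
   Context: $\mathbb{N}=\{1,2,3,\dots\}$. For $q=\infty$ one sets $q/(q-d)=1$. $\ell^p$ ($1\le p<\infty$) denotes sequences with $\|\mathbf{a}\|_p=(\sum_j|a_j|^p)^{1/p}<\infty$, and $\ell^\infty$ bounded sequences with the sup norm; $\mathbf{x}^d=(x_j^d)_{j\ge1}$. For $\mathbf{x}\in\ell^q$ each series $(\mathbf{a}_{i,d},\mathbf{x}^d)$ converges absolutely by Hölder's inequality. $P_i$ is the multiplicative polynomial $\sum_{k}\sum_{\Delta\in\mathcal{D}_k}\sum_{J\in\mathbb{N}^k}a_{i,\Delta,J}x_J^\Delta$ with coefficients $a_{i,(d_1,\dots,d_k),(j_1,\dots,j_k)}=a_{i,d_1,j_1}\cdots a_{i,d_k,j_k}$. *)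

theory Defs
  imports "HOL-Analysis.Analysis"
begin

text \<open>Membership in the sequence space ell^p, for an extended real exponent p in [1,\<infinity>].
  Sequences are indexed by nat starting at 0 (a harmless shift of the index set N = {1,2,...}).\<close>
definition in_lp :: "ereal \<Rightarrow> (nat \<Rightarrow> 'a::real_normed_vector) \<Rightarrow> bool" where
  "in_lp p x = (if p = \<infinity> then bounded (range x)
                else summable (\<lambda>j. norm (x j) powr real_of_ereal p))"

definition exp_qd :: "ereal \<Rightarrow> nat \<Rightarrow> ereal" where
  "exp_qd q d = (if q = \<infinity> then 1 else ereal (real_of_ereal q / (real_of_ereal q - real d)))"

definition pairing :: "(nat \<Rightarrow> 'a::{real_normed_field}) \<Rightarrow> nat \<Rightarrow> (nat \<Rightarrow> 'a) \<Rightarrow> 'a" where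
  "pairing a d x = (\<Sum>j. a j * x j ^ d)"

definition Dset :: "nat \<Rightarrow> nat \<Rightarrow> nat list set" where
  "Dset D k = {ds. length ds = k \<and> (\<forall>d\<in>set ds. 1 \<le> d) \<and> sum_list ds \<le> D}"

definition Ppoly :: "nat \<Rightarrow> (nat \<Rightarrow> nat \<Rightarrow> 'a::real_normed_field) \<Rightarrow> (nat \<Rightarrow> 'a) \<Rightarrow> 'a" where
  "Ppoly D a x = (\<Sum>k\<in>{1..D}. \<Sum>ds\<in>Dset D k. prod_list (map (\<lambda>d. pairing (a d) d x) ds))"

end

theory Submission
  imports Defs
begin

text \<open>The sequences x with |x_j| \<le> m_j form a compact set K in the product topology
  (Tychonoff). Young's inequality with the exponents q/(q-d) and q/d shows that
  \<Sum>_j |a_{i,d,j}| m_j^d < \<infinity>, so by the Weierstrass M-test every pairing (a_{i,d}, x^d),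
  and hence every P_i, is continuous on K. Approximate solvability of the finite subsystems
  says that the closed sets {x \<in> K. |P_i(x) - b_i| \<le> \<epsilon>} have the finite intersection
  property; a point common to all of them solves every equation exactly, and it lies in
  \<ell>^q because it is dominated by m.\<close>

lemma compact_exact_solution_if_finitely_approximable:
  fixes f :: "'i \<Rightarrow> 'a::t2_space \<Rightarrow> 'b::metric_space"
  assumes K: "compact K"
    and cont: "\<And>i. i \<in> I \<Longrightarrow> continuous_on K (f i)"
    and approx: "\<And>\<epsilon> S. 0 < \<epsilon> \<Longrightarrow> finite S \<Longrightarrow> S \<subseteq> I \<Longrightarrow>
                   \<exists>x\<in>K. \<forall>i\<in>S. dist (f i x) (b i) \<le> \<epsilon>"
  shows "\<exists>x\<in>K. \<forall>i\<in>I. f i x = b i"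
proof -
  define F where "F = (\<lambda>(i, \<epsilon>). K \<inter> f i -` cball (b i) \<epsilon>)"
  have "K \<inter> (\<Inter>z\<in>I \<times> {0::real<..}. F z) \<noteq> {}"
  proof (rule compact_imp_fip_image[OF K])
    fix z assume "z \<in> I \<times> {0::real<..}"
    then show "closed (F z)"
      using cont compact_imp_closed[OF K]
      by (auto simp: F_def intro!: continuous_closed_preimage)
  next
    fix J assume J: "finite J" "J \<subseteq> I \<times> {0::real<..}"
    define \<epsilon> where "\<epsilon> = Min (insert 1 (snd ` J))"
    have "0 < \<epsilon>"
      using J by (auto simp: \<epsilon>_def)
    moreover have "finite (fst ` J)" "fst ` J \<subseteq> I"
      using J by auto
    ultimately obtain x where "x \<in> K" and x: "\<forall>i\<in>fst ` J. dist (f i x) (b i) \<le> \<epsilon>"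
      using approx by blast
    have "x \<in> F (i, e)" if "(i, e) \<in> J" for i e
    proof -
      have "\<epsilon> \<le> e"
        using J that unfolding \<epsilon>_def by (intro Min_le) force+
      moreover have "dist (f i x) (b i) \<le> \<epsilon>"
        using x that by force
      ultimately show ?thesis
        using \<open>x \<in> K\<close> by (simp add: F_def dist_commute)
    qed
    with \<open>x \<in> K\<close> show "K \<inter> (\<Inter>z\<in>J. F z) \<noteq> {}"
      by fast
  qed
  then obtain x where "x \<in> K" and xF: "\<And>i e. i \<in> I \<Longrightarrow> 0 < e \<Longrightarrow> x \<in> F (i, e)"
    by blast
  have "f i x = b i" if "i \<in> I" for i
  proof -
    have "dist (f i x) (b i) \<le> 0 + e" if "0 < e" for e
      using xF[OF \<open>i \<in> I\<close> that] by (simp add: F_def dist_commute)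
    then show ?thesis
      using field_le_epsilon by (metis dist_le_zero_iff)
  qed
  with \<open>x \<in> K\<close> show ?thesis
    by blast
qed

lemma compact_norm_le_box:
  fixes m :: "nat \<Rightarrow> real"
  shows "compact {x::nat \<Rightarrow> 'a::{real_normed_vector, heine_borel}. \<forall>j. norm (x j) \<le> m j}"
proof -
  have "{x::nat \<Rightarrow> 'a. \<forall>j. norm (x j) \<le> m j} = PiE UNIV (\<lambda>j. cball 0 (m j))"
    by (auto simp: PiE_iff)
  moreover have "compactin (product_topology (\<lambda>j. euclidean) UNIV) (PiE UNIV (\<lambda>j. cball (0::'a) (m j)))"
    by (simp add: compactin_PiE)
  ultimately show ?thesis
    by (simp add: euclidean_product_topology)
qed

lemma in_lp_dominated:
  fixes x :: "nat \<Rightarrow> 'a::real_normed_vector" and y :: "nat \<Rightarrow> 'b::real_normed_vector"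
  assumes "0 \<le> q" and y: "in_lp q y" and le: "\<And>j. norm (x j) \<le> norm (y j)"
  shows "in_lp q x"
proof (cases "q = \<infinity>")
  case True
  with y obtain B where "\<And>j. norm (y j) \<le> B"
    by (auto simp: in_lp_def bounded_iff)
  with le True show ?thesis
    by (auto simp: in_lp_def bounded_iff intro: order_trans)
next
  case False
  with \<open>0 \<le> q\<close> obtain Q where q: "q = ereal Q" and "0 \<le> Q"
    by (cases q) auto
  have "summable (\<lambda>j. norm (x j) powr Q)"
    by (rule summable_comparison_test'[where g = "\<lambda>j. norm (y j) powr Q"])
       (use y q le \<open>0 \<le> Q\<close> in \<open>auto simp: in_lp_def intro: powr_mono2\<close>)
  with q show ?thesis
    by (simp add: in_lp_def)
qed

lemma summable_norm_mult_power_if_in_lp: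
  fixes c :: "nat \<Rightarrow> 'a::real_normed_vector"
  assumes c: "in_lp (exp_qd q d) c" and m: "in_lp q m" and m_nonneg: "\<And>j. 0 \<le> m j"
    and "1 \<le> d" and d_less: "ereal (real d) < q"
  shows "summable (\<lambda>j. norm (c j) * m j ^ d)"
proof (cases "q = \<infinity>")
  case True
  with m obtain B where B: "\<And>j. norm (m j) \<le> B"
    by (auto simp: in_lp_def bounded_iff)
  have "summable (\<lambda>j. norm (c j) * B ^ d)"
    using c True by (simp add: in_lp_def exp_qd_def summable_mult2)
  then show ?thesis
    by (rule summable_comparison_test')
       (use B m_nonneg in \<open>auto intro!: mult_left_mono power_mono\<close>)
next
  case False
  with d_less obtain Q where q: "q = ereal Q" and "real d < Q"
    by (cases q) auto
  define p where "p = Q / (Q - real d)"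
  define r where "r = Q / real d"
  have "1 < p" "1 < r" "1/p + 1/r = 1"
    using \<open>real d < Q\<close> \<open>1 \<le> d\<close> by (auto simp: p_def r_def field_simps)
  have "(m j ^ d) powr r = m j powr Q" for j
    using m_nonneg[of j] \<open>1 \<le> d\<close>
    by (cases "m j = 0") (auto simp: r_def powr_realpow[symmetric] powr_powr)
  then have young: "norm (c j) * m j ^ d \<le> norm (c j) powr p / p + m j powr Q / r" for j
    using Youngs_inequality[OF \<open>1 < p\<close> \<open>1 < r\<close> \<open>1/p + 1/r = 1\<close>, of "norm (c j)" "m j ^ d"]
      m_nonneg[of j] by simp
  have "summable (\<lambda>j. norm (c j) powr p / p + m j powr Q / r)"
    using c m m_nonneg q by (intro summable_add summable_divide) (simp_all add: in_lp_def exp_qd_def p_def)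
  then show ?thesis
    by (rule summable_comparison_test') (use young m_nonneg in simp)
qed

lemma continuous_on_pairing:
  fixes c :: "nat \<Rightarrow> 'a::{real_normed_field, banach}"
  assumes bound: "\<And>x j. x \<in> A \<Longrightarrow> norm (x j) \<le> m j"
    and summable: "summable (\<lambda>j. norm (c j) * m j ^ d)"
  shows "continuous_on A (pairing c d)"
proof -
  have "uniform_limit A (\<lambda>n x. \<Sum>j<n. c j * x j ^ d) (\<lambda>x. \<Sum>j. c j * x j ^ d) sequentially"
  proof (rule Weierstrass_m_test[OF _ summable])
    fix j x assume "x \<in> A"
    then have "norm (x j) ^ d \<le> m j ^ d"
      using bound by (intro power_mono) auto
    then show "norm (c j * x j ^ d) \<le> norm (c j) * m j ^ d"
      by (simp add: norm_mult norm_power mult_left_mono)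
  qed
  moreover have "continuous_on A (\<lambda>x. \<Sum>j<n. c j * x j ^ d)" for n
    by (intro continuous_intros continuous_on_subset[OF continuous_on_product_coordinates]) auto
  ultimately have "continuous_on A (\<lambda>x. \<Sum>j. c j * x j ^ d)"
    by (intro uniform_limit_theorem) auto
  then show ?thesis
    unfolding pairing_def[abs_def] .
qed

lemma continuous_on_prod_list_map:
  fixes f :: "'b \<Rightarrow> 'c::topological_space \<Rightarrow> 'a::real_normed_field"
  shows "(\<And>d. d \<in> set ds \<Longrightarrow> continuous_on A (f d)) \<Longrightarrow>
     continuous_on A (\<lambda>x. prod_list (map (\<lambda>d. f d x) ds))"
  by (induction ds) (auto intro!: continuous_on_mult)

lemma continuous_on_Ppoly:
  fixes c :: "nat \<Rightarrow> nat \<Rightarrow> 'a::{real_normed_field, banach}"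
  assumes bound: "\<And>x j. x \<in> A \<Longrightarrow> norm (x j) \<le> m j"
    and summable: "\<And>d. d \<in> {1..D} \<Longrightarrow> summable (\<lambda>j. norm (c d j) * m j ^ d)"
  shows "continuous_on A (Ppoly D c)"
proof -
  have "continuous_on A (pairing (c d) d)" if "ds \<in> Dset D k" "d \<in> set ds" for k ds d
  proof (rule continuous_on_pairing)
    show "\<And>x j. x \<in> A \<Longrightarrow> norm (x j) \<le> m j"
      by (rule bound)
    have "d \<in> {1..D}"
      using that member_le_sum_list[of d ds] by (auto simp: Dset_def)
    then show "summable (\<lambda>j. norm (c d j) * m j ^ d)"
      by (rule summable)
  qed
  then have "continuous_on A (\<lambda>x. \<Sum>k\<in>{1..D}. \<Sum>ds\<in>Dset D k.
               prod_list (map (\<lambda>d. pairing (c d) d x) ds))"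
    by (intro continuous_on_sum continuous_on_prod_list_map)
  then show ?thesis
    unfolding Ppoly_def[abs_def] .
qed

theorem theorem5:
  fixes D :: nat and q :: ereal and I :: "'i set"
    and a :: "'i \<Rightarrow> nat \<Rightarrow> nat \<Rightarrow> 'a::{real_normed_field, banach, heine_borel}"
    and b :: "'i \<Rightarrow> 'a" and m :: "nat \<Rightarrow> real"
  assumes D_pos: "1 \<le> D"
    and q_gt: "ereal (real D) < q"
    and I_inf: "infinite I"
    and a_lp: "\<forall>i\<in>I. \<forall>d\<in>{1..D}. in_lp (exp_qd q d) (a i d)"
    and m_lp: "in_lp q m"
    and m_nonneg: "\<forall>j. 0 \<le> m j"
    and approx: "\<forall>\<epsilon>>0. \<forall>S. finite S \<and> S \<subseteq> I \<longrightarrow>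
        (\<exists>x. in_lp q x \<and> (\<forall>j. norm (x j) \<le> m j) \<and>
             (\<forall>i\<in>S. norm (Ppoly D (a i) x - b i) \<le> \<epsilon>))"
  shows "\<exists>x. in_lp q x \<and> (\<forall>j. norm (x j) \<le> m j) \<and> (\<forall>i\<in>I. Ppoly D (a i) x = b i)"
proof -
  define K where "K = {x::nat \<Rightarrow> 'a. \<forall>j. norm (x j) \<le> m j}"
  have compact_K: "compact K"
    unfolding K_def by (rule compact_norm_le_box)
  have cont: "continuous_on K (Ppoly D (a i))" if "i \<in> I" for i
  proof (rule continuous_on_Ppoly)
    show "\<And>x j. x \<in> K \<Longrightarrow> norm (x j) \<le> m j"
      by (simp add: K_def)
    fix d assume d: "d \<in> {1..D}"
    then have "ereal (real d) < q"
      by (intro order_le_less_trans[OF _ q_gt]) simp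
    with d that a_lp m_lp m_nonneg show "summable (\<lambda>j. norm (a i d j) * m j ^ d)"
      by (intro summable_norm_mult_power_if_in_lp) auto
  qed
  have approx_K: "\<exists>x\<in>K. \<forall>i\<in>S. dist (Ppoly D (a i) x) (b i) \<le> \<epsilon>"
    if "0 < \<epsilon>" "finite S" "S \<subseteq> I" for \<epsilon> S
  proof -
    from approx that obtain x where "\<forall>j. norm (x j) \<le> m j"
      and "\<forall>i\<in>S. norm (Ppoly D (a i) x - b i) \<le> \<epsilon>"
      by blast
    then show ?thesis
      by (auto simp: K_def dist_norm)
  qed
  obtain x where "x \<in> K" and solves: "\<forall>i\<in>I. Ppoly D (a i) x = b i"
    using compact_exact_solution_if_finitely_approximable[OF compact_K cont approx_K] by blast
  then have bound: "\<forall>j. norm (x j) \<le> m j"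
    by (simp add: K_def)
  have "0 \<le> q"
    using q_gt by (metis ereal_less_eq(5) less_imp_le of_nat_0_le_iff order_trans)
  moreover have "norm (x j) \<le> norm (m j)" for j
    using bound by (metis abs_ge_self order_trans real_norm_def)
  ultimately have "in_lp q x"
    using in_lp_dominated m_lp by blast
  with bound solves show ?thesis
    by blast
qed

end
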